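(* Let $G$ be a signed digraph with vertex set $V$ such that all cycles of $G$ have the same sign, and let $f$ be a Boolean network on $G$ with a unique fixed point. Then there is a permutation $\pi$ of $V$ (viewed as a word of length $|V|$) such that every word containing $\pi$ synchronizes $f$. In particular, $\pi$ synchronizes $f$.
   Context: A signed digraph on $V$ is $(V,E)$ with $E\subseteq V\times V\times\{-1,1\}$; cycles have no repeated vertices (a loop is a cycle) and their sign is the product of arc signs. A Boolean network (BN) is $f:\{0,1\}^V\to\{0,1\}^V$; its signed interaction digraph has a positive (negative) arc from $j$ to $i$ iff for some $x$ with $x_j=0$, $f_i(x+e_j)-f_i(x)$ is positive (negative). A BN on $G$ is one whose signed interaction digraph is $G$. A word $u$ contains a word $v$ if $v$ can be obtained by deleting some letters of $u$. $f^i(x)$ is $x$ with $x_i$ replaced by $f_i(x)$; $f^{i_1\cdots i_\ell}=f^{i_\ell}\circ\cdots\circ f^{i_1}$; $w$ synchronizes $f$ if $f^w$ is constant. *)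

theory Defs
  imports Main "HOL-Library.Sublist"
begin

type_synonym 'v bn = "('v \<Rightarrow> bool) \<Rightarrow> ('v \<Rightarrow> bool)"
type_synonym 'v arc = "'v \<times> 'v \<times> int"

definition signed_digraph :: "'v arc set \<Rightarrow> bool" where
  "signed_digraph E \<longleftrightarrow> (\<forall>(j, i, s) \<in> E. s = 1 \<or> s = -1)"

definition is_cycle :: "'v arc set \<Rightarrow> 'v arc list \<Rightarrow> bool" where
  "is_cycle E c \<longleftrightarrow> c \<noteq> [] \<and> set c \<subseteq> E \<and> distinct (map fst c) \<and>
     (\<forall>t < length c. fst (snd (c ! t)) = fst (c ! ((t + 1) mod length c)))"

definition cycle_sign :: "'v arc list \<Rightarrow> int" where
  "cycle_sign c = prod_list (map (\<lambda>a. snd (snd a)) c)"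

text \<open>Signed interaction digraph of a Boolean network (False = 0, True = 1).\<close>
definition interaction_digraph :: "'v bn \<Rightarrow> 'v arc set" where
  "interaction_digraph f =
     {(j, i, 1) | j i. \<exists>x. \<not> x j \<and> \<not> f x i \<and> f (x(j := True)) i} \<union>
     {(j, i, -1) | j i. \<exists>x. \<not> x j \<and> f x i \<and> \<not> f (x(j := True)) i}"

text \<open>f^i and f^w (letters applied left to right).\<close>
definition upd1 :: "'v bn \<Rightarrow> 'v \<Rightarrow> ('v \<Rightarrow> bool) \<Rightarrow> ('v \<Rightarrow> bool)" where
  "upd1 f i x = x(i := f x i)"

definition upd_word :: "'v bn \<Rightarrow> 'v list \<Rightarrow> ('v \<Rightarrow> bool) \<Rightarrow> ('v \<Rightarrow> bool)" where
  "upd_word f w = fold (upd1 f) w"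

definition synchronizes :: "'v list \<Rightarrow> 'v bn \<Rightarrow> bool" where
  "synchronizes w f \<longleftrightarrow> (\<exists>c. \<forall>x. upd_word f w x = c)"

end

theory Submission
  imports Defs
begin

text \<open>
  Let y be the unique fixed point, and call a subcube (the points agreeing with y on a set F of
  frozen coordinates) stable if f maps it into itself. If some free coordinate k is constant on a
  stable subcube, the constant is y k, so a single update of k moves the whole subcube into the
  stable subcube with k frozen as well, and no later update leaves it. Induction on the number of
  free coordinates then yields the permutation, with arbitrary letters allowed in between.

  Such a k always exists. Otherwise every free coordinate i has an in-arc from a free coordinate j
  of sign sign(y i) sign(y j); these arcs contain a cycle, which is positive, so all cycles are
  positive. But then an initial strong component H of the free part is balanced, and freezing H
  to either of its two balancing labellings gives a smaller stable subcube. By induction both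
  contain a fixed point, contradicting uniqueness.
\<close>

section \<open>Stable subcubes\<close>

definition in_subcube :: "'v set \<Rightarrow> ('v \<Rightarrow> bool) \<Rightarrow> ('v \<Rightarrow> bool) \<Rightarrow> bool" where
  "in_subcube F a x \<longleftrightarrow> (\<forall>i\<in>F. x i = a i)"

definition stable_subcube :: "'v bn \<Rightarrow> 'v set \<Rightarrow> ('v \<Rightarrow> bool) \<Rightarrow> bool" where
  "stable_subcube f F a \<longleftrightarrow> (\<forall>x. in_subcube F a x \<longrightarrow> in_subcube F a (f x))"

lemma in_subcube_refl [simp]: "in_subcube F a a"
  by (simp add: in_subcube_def)

lemma stable_subcube_insert:
  assumes "stable_subcube f F a" "k \<notin> F" "\<forall>x. in_subcube F a x \<longrightarrow> f x k = c"
  shows "stable_subcube f (insert k F) (a(k := c))"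
  unfolding stable_subcube_def
proof (intro allI impI)
  fix x
  assume "in_subcube (insert k F) (a(k := c)) x"
  then have "in_subcube F a x"
    using \<open>k \<notin> F\<close> by (auto simp: in_subcube_def)
  then show "in_subcube (insert k F) (a(k := c)) (f x)"
    using assms by (auto simp: stable_subcube_def in_subcube_def)
qed

lemma card_Compl_insert_less:
  fixes F :: "'v::finite set"
  assumes "k \<notin> F"
  shows "card (- insert k F) < card (- F)"
proof -
  have "- insert k F \<subset> - F" using assms by auto
  then show ?thesis by (simp add: psubset_card_mono)
qed

definition nonconstant_outside :: "'v bn \<Rightarrow> 'v set \<Rightarrow> ('v \<Rightarrow> bool) \<Rightarrow> bool" where
  "nonconstant_outside f F a \<longleftrightarrow> (\<forall>i. i \<notin> F \<longrightarrow> \<not> (\<exists>c. \<forall>x. in_subcube F a x \<longrightarrow> f x i = c))"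

lemma nonconstant_outsideD:
  assumes "nonconstant_outside f F a" "i \<notin> F" "in_subcube F a x"
  obtains z where "in_subcube F a z" "f z i \<noteq> f x i"
  using assms unfolding nonconstant_outside_def by blast

section \<open>Arcs of the interaction digraph\<close>

definition bool_sign :: "bool \<Rightarrow> int" where
  "bool_sign b = (if b then -1 else 1)"

lemma bool_sign_square [simp]: "bool_sign b * bool_sign b = 1"
  by (simp add: bool_sign_def)

lemma bool_sign_Not [simp]: "bool_sign (\<not> b) = - bool_sign b"
  by (simp add: bool_sign_def)

lemma interaction_digraph_signed: "signed_digraph (interaction_digraph f)"
  by (auto simp: signed_digraph_def interaction_digraph_def)

lemma interaction_arcI:
  assumes "f (x(j := b)) i = c" "f (x(j := \<not> b)) i = (\<not> c)"
  shows "(j, i, bool_sign c * bool_sign b) \<in> interaction_digraph f"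
proof -
  let ?x0 = "x(j := False)"
  have x0: "\<not> ?x0 j" "f ?x0 i = (c \<noteq> b)" "f (?x0(j := True)) i = (c = b)"
    using assms by (cases b; simp)+
  show ?thesis
  proof (cases "c = b")
    case True
    then have "(j, i, 1) \<in> interaction_digraph f"
      using x0 unfolding interaction_digraph_def by blast
    with True show ?thesis
      by simp
  next
    case False
    then have "(j, i, -1) \<in> interaction_digraph f"
      using x0 unfolding interaction_digraph_def by blast
    with False show ?thesis
      by (cases b) (simp_all add: bool_sign_def)
  qed
qed

lemma influencing_arc_in_subcube:
  fixes f :: "'v::finite bn"
  assumes "in_subcube F a x" "in_subcube F a z0" "f z0 i \<noteq> f x i"
  shows "\<exists>j. j \<notin> F \<and> (j, i, bool_sign (f x i) * bool_sign (x j)) \<in> interaction_digraph f"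
proof -
  \<comment> \<open>A point z of the subcube nearest to x with f z i \<noteq> f x i differs from x at some j,
    and resetting z j to x j restores the value f x i.\<close>
  let ?P = "\<lambda>z. in_subcube F a z \<and> f z i \<noteq> f x i"
  let ?dist = "\<lambda>z. card {j. z j \<noteq> x j}"
  obtain z where z: "?P z" and min: "\<And>z'. ?P z' \<Longrightarrow> ?dist z \<le> ?dist z'"
    using ex_has_least_nat[of ?P z0 ?dist] assms by blast
  have "z \<noteq> x"
    using z by auto
  then obtain j where j: "z j \<noteq> x j"
    by auto
  have "j \<notin> F"
    using j z assms(1) by (auto simp: in_subcube_def)
  have "{k. (z(j := x j)) k \<noteq> x k} = {k. z k \<noteq> x k} - {j}"
    by auto
  moreover have "card ({k. z k \<noteq> x k} - {j}) < card {k. z k \<noteq> x k}"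
    using j by (intro card_Diff1_less) auto
  ultimately have "?dist (z(j := x j)) < ?dist z"
    by (simp only:)
  moreover have "in_subcube F a (z(j := x j))"
    using z assms(1) by (auto simp: in_subcube_def)
  ultimately have "f (z(j := x j)) i = f x i"
    using min by fastforce
  moreover have "z(j := \<not> x j) = z"
    using j by (intro ext) auto
  ultimately show ?thesis
    using interaction_arcI[of f z j "x j" i "f x i"] z \<open>j \<notin> F\<close> by auto
qed

section \<open>Walks and cycles\<close>

fun walk :: "'v arc set \<Rightarrow> 'v \<Rightarrow> 'v \<Rightarrow> 'v arc list \<Rightarrow> bool" where
  "walk E a b [] \<longleftrightarrow> a = b"
| "walk E a b (e # es) \<longleftrightarrow> fst e = a \<and> e \<in> E \<and> walk E (fst (snd e)) b es"

lemma walk_append: "walk E a b (xs @ ys) \<longleftrightarrow> (\<exists>u. walk E a u xs \<and> walk E u b ys)"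
  by (induction xs arbitrary: a) auto

lemma walk_mono: "walk E a b es \<Longrightarrow> E \<subseteq> E' \<Longrightarrow> walk E' a b es"
  by (induction es arbitrary: a) auto

lemma walk_set: "walk E a b es \<Longrightarrow> set es \<subseteq> E"
  by (induction es arbitrary: a) auto

lemma walk_nth_Suc:
  "walk E a b es \<Longrightarrow> Suc t < length es \<Longrightarrow> fst (snd (es ! t)) = fst (es ! Suc t)"
proof (induction es arbitrary: a t)
  case (Cons e es)
  then show ?case by (cases t; cases es) auto
qed simp

lemma walk_last: "walk E a b es \<Longrightarrow> es \<noteq> [] \<Longrightarrow> fst (snd (last es)) = b"
  by (induction es arbitrary: a) (auto split: if_splits)

lemma walk_split:
  assumes "walk E a b es" "p < length es"
  shows "walk E a (fst (es ! p)) (take p es) \<and> walk E (fst (es ! p)) b (drop p es)"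
proof -
  obtain u where u: "walk E a u (take p es)" "walk E u b (drop p es)"
    using assms(1) walk_append[of E a b "take p es" "drop p es"] by auto
  moreover have "drop p es = es ! p # drop (Suc p) es"
    using assms(2) by (simp add: Cons_nth_drop_Suc)
  ultimately have "u = fst (es ! p)"
    by simp
  with u show ?thesis
    by simp
qed

lemma closed_walk_is_cycle:
  assumes "walk E a a es" "es \<noteq> []" "distinct (map fst es)"
  shows "is_cycle E es"
proof -
  have consecutive: "fst (snd (es ! t)) = fst (es ! ((t + 1) mod length es))"
    if "t < length es" for t
  proof (cases "Suc t < length es")
    case True
    then show ?thesis using walk_nth_Suc[OF assms(1)] by simp
  next
    case False
    then have "Suc t = length es"
      using that by simp
    then have "t = length es - 1" "(t + 1) mod length es = 0"
      by simp_all
    moreover have "fst (es ! 0) = a"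
      using assms(1,2) by (cases es) auto
    moreover have "fst (snd (es ! (length es - 1))) = a"
      using walk_last[OF assms(1,2)] assms(2) by (simp add: last_conv_nth)
    ultimately show ?thesis
      by simp
  qed
  then show ?thesis
    unfolding is_cycle_def using assms(2,3) walk_set[OF assms(1)] consecutive by blast
qed

lemma is_cycle_mono: "is_cycle E c \<Longrightarrow> E \<subseteq> E' \<Longrightarrow> is_cycle E' c"
  by (auto simp: is_cycle_def)

lemma closed_walk_split:
  assumes "walk E a a es" "\<not> distinct (map fst es)"
  obtains A B C u where "es = A @ B @ C" "B \<noteq> []" "A @ C \<noteq> []"
    "walk E a u A" "walk E u u B" "walk E u a C"
proof -
  obtain p q where pq: "p < q" "q < length es" "fst (es ! p) = fst (es ! q)"
    using assms(2) unfolding distinct_conv_nth by (auto simp: nat_neq_iff)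
  let ?u = "fst (es ! p)"
  define A B C where "A = take p es" "B = take (q - p) (drop p es)" "C = drop q es"
  have "drop (q - p) (drop p es) = C"
    using pq(1) unfolding A_B_C_def by simp
  then have "es = A @ B @ C"
    unfolding A_B_C_def by (metis append_take_drop_id)
  moreover have "walk E a ?u A" and rest: "walk E ?u a (drop p es)"
    using walk_split[OF assms(1), of p] pq unfolding A_B_C_def by auto
  moreover have "walk E ?u ?u B" "walk E ?u a C"
    using walk_split[OF rest, of "q - p"] pq unfolding A_B_C_def by auto
  moreover have "B \<noteq> []" "A @ C \<noteq> []"
    using pq unfolding A_B_C_def by auto
  ultimately show thesis
    using that by blast
qed

lemma cycle_sign_Nil [simp]: "cycle_sign [] = 1"
  by (simp add: cycle_sign_def)

lemma cycle_sign_Cons [simp]: "cycle_sign (e # es) = snd (snd e) * cycle_sign es"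
  by (simp add: cycle_sign_def)

lemma cycle_sign_append [simp]: "cycle_sign (xs @ ys) = cycle_sign xs * cycle_sign ys"
  by (simp add: cycle_sign_def)

lemma closed_walk_sign:
  assumes "\<forall>c. is_cycle E c \<longrightarrow> cycle_sign c = 1" "walk E a a es"
  shows "cycle_sign es = 1"
  using assms(2)
proof (induction "length es" arbitrary: a es rule: less_induct)
  case less
  show ?case
  proof (cases "distinct (map fst es)")
    case True
    show ?thesis
    proof (cases "es = []")
      case False
      with True show ?thesis
        using assms(1) closed_walk_is_cycle[OF less.prems] by blast
    qed simp
  next
    case False
    with less.prems obtain A B C u where split: "es = A @ B @ C" "B \<noteq> []" "A @ C \<noteq> []"
      "walk E a u A" "walk E u u B" "walk E u a C"
      by (rule closed_walk_split)
    then have "walk E a a (A @ C)"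
      by (auto simp: walk_append)
    then have "cycle_sign (A @ C) = 1"
      using less.hyps[of "A @ C" a] split by (auto simp del: cycle_sign_append)
    moreover have "cycle_sign B = 1"
      using less.hyps[of B u] split by auto
    ultimately show ?thesis
      using split(1) by (simp add: mult.left_commute)
  qed
qed

lemma closed_walk_contains_cycle:
  assumes "walk E a a es" "es \<noteq> []"
  shows "\<exists>u c. walk E u u c \<and> is_cycle E c"
  using assms
proof (induction "length es" arbitrary: a es rule: less_induct)
  case less
  show ?case
  proof (cases "distinct (map fst es)")
    case True
    with less.prems(1) closed_walk_is_cycle[OF less.prems True] show ?thesis
      by (intro exI conjI)
  next
    case False
    with less.prems(1) obtain A B C u where split: "es = A @ B @ C" "B \<noteq> []" "A @ C \<noteq> []"
      "walk E a u A" "walk E u u B" "walk E u a C"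
      by (rule closed_walk_split)
    then have "length B < length es"
      by simp
    from less.hyps[OF this split(5,2)] show ?thesis .
  qed
qed

lemma walk_sign_signed_digraph:
  assumes "signed_digraph E" "walk E a b es"
  shows "cycle_sign es = 1 \<or> cycle_sign es = -1"
  using assms(2)
proof (induction es arbitrary: a)
  case (Cons e es)
  then have "e \<in> E" "walk E (fst (snd e)) b es"
    by simp_all
  then have "snd (snd e) = 1 \<or> snd (snd e) = -1"
    using assms(1) by (auto simp: signed_digraph_def)
  moreover have "cycle_sign es = 1 \<or> cycle_sign es = -1"
    using Cons.IH \<open>walk E (fst (snd e)) b es\<close> .
  ultimately show ?case
    by auto
qed simp

definition arc_rel :: "'v arc set \<Rightarrow> ('v \<times> 'v) set" where
  "arc_rel E = {(j, i). \<exists>s. (j, i, s) \<in> E}"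

lemma walk_of_rtrancl:
  assumes "(u, w) \<in> (arc_rel E)\<^sup>*"
  shows "\<exists>es. walk E u w es"
  using assms
proof (induction rule: rtrancl_induct)
  case base
  have "walk E u u []"
    by simp
  then show ?case ..
next
  case (step v w)
  then obtain es s where "walk E u v es" "(v, w, s) \<in> E"
    by (auto simp: arc_rel_def)
  then have "walk E u w (es @ [(v, w, s)])"
    by (auto simp: walk_append)
  then show ?case ..
qed

definition arcs_within :: "'v arc set \<Rightarrow> 'v set \<Rightarrow> 'v arc set" where
  "arcs_within E U = {e \<in> E. fst e \<in> U \<and> fst (snd e) \<in> U}"

lemma initial_component_vertex_exists:
  fixes R :: "('v::finite \<times> 'v) set"
  assumes "R \<subseteq> U \<times> U" "v0 \<in> U"
  shows "\<exists>v\<in>U. \<forall>u. (u, v) \<in> R\<^sup>* \<longrightarrow> (v, u) \<in> R\<^sup>*"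
proof -
  define anc where "anc v = {u. (u, v) \<in> R\<^sup>*}" for v
  obtain v where v: "v \<in> U" and min: "\<And>v'. v' \<in> U \<Longrightarrow> card (anc v) \<le> card (anc v')"
    using ex_has_least_nat[of "\<lambda>v. v \<in> U" v0 "\<lambda>v. card (anc v)"] assms(2) by blast
  have "(v, u) \<in> R\<^sup>*" if "(u, v) \<in> R\<^sup>*" for u
  proof (cases "u = v")
    case False
    then have "u \<in> U"
      using that assms(1) by (auto elim: converse_rtranclE)
    moreover have "anc u \<subseteq> anc v"
      using that by (auto simp: anc_def)
    ultimately have "anc u = anc v"
      using min by (meson card_seteq finite)
    then show ?thesis
      by (simp add: anc_def set_eq_iff)
  qed simp
  with v show ?thesis
    by blast
qed

lemma initial_strong_component:
  fixes E :: "'v::finite arc set"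
  assumes "U \<noteq> {}"
  obtains v H where "v \<in> H" "H \<subseteq> U"
    "\<forall>j i s. (j, i, s) \<in> E \<longrightarrow> i \<in> H \<longrightarrow> j \<in> U \<longrightarrow> j \<in> H"
    "\<forall>u\<in>H. (\<exists>es. walk E v u es) \<and> (\<exists>es. walk E u v es)"
proof -
  define R where "R = arc_rel (arcs_within E U)"
  have R: "R \<subseteq> U \<times> U"
    by (auto simp: R_def arc_rel_def arcs_within_def)
  obtain v where "v \<in> U" and v: "\<forall>u. (u, v) \<in> R\<^sup>* \<longrightarrow> (v, u) \<in> R\<^sup>*"
    using initial_component_vertex_exists[OF R] assms by blast
  define H where "H = {u. (u, v) \<in> R\<^sup>*}"
  have "v \<in> H"
    by (simp add: H_def)
  moreover have "H \<subseteq> U"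
    using R \<open>v \<in> U\<close> by (auto simp: H_def elim: converse_rtranclE)
  moreover have "\<forall>j i s. (j, i, s) \<in> E \<longrightarrow> i \<in> H \<longrightarrow> j \<in> U \<longrightarrow> j \<in> H"
  proof (intro allI impI)
    fix j i s
    assume "(j, i, s) \<in> E" "i \<in> H" "j \<in> U"
    then have "(j, i) \<in> R"
      using \<open>H \<subseteq> U\<close> by (auto simp: R_def arc_rel_def arcs_within_def)
    with \<open>i \<in> H\<close> show "j \<in> H"
      by (simp add: H_def converse_rtrancl_into_rtrancl)
  qed
  moreover have walk_E: "\<exists>es. walk E u w es" if uw: "(u, w) \<in> R\<^sup>*" for u w
  proof -
    obtain es where "walk (arcs_within E U) u w es"
      using walk_of_rtrancl uw unfolding R_def by meson
    then have "walk E u w es"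
      by (rule walk_mono) (auto simp: arcs_within_def)
    then show ?thesis ..
  qed
  moreover have "\<forall>u\<in>H. (\<exists>es. walk E v u es) \<and> (\<exists>es. walk E u v es)"
  proof
    fix u
    assume "u \<in> H"
    then have "(u, v) \<in> R\<^sup>*" "(v, u) \<in> R\<^sup>*"
      using v by (auto simp: H_def)
    then show "(\<exists>es. walk E v u es) \<and> (\<exists>es. walk E u v es)"
      by (simp add: walk_E)
  qed
  ultimately show thesis
    using that by blast
qed

lemma cycle_exists_if_all_in_arcs:
  fixes E :: "'v::finite arc set"
  assumes "U \<noteq> {}" "\<forall>i\<in>U. \<exists>j\<in>U. \<exists>s. (j, i, s) \<in> E"
  shows "\<exists>u c. walk E u u c \<and> is_cycle E c"
proof -
  obtain v H where "v \<in> H" "H \<subseteq> U"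
    and closed: "\<forall>j i s. (j, i, s) \<in> E \<longrightarrow> i \<in> H \<longrightarrow> j \<in> U \<longrightarrow> j \<in> H"
    and connected: "\<forall>u\<in>H. (\<exists>es. walk E v u es) \<and> (\<exists>es. walk E u v es)"
    using initial_strong_component[OF assms(1)] by blast
  then obtain j s where "j \<in> U" "(j, v, s) \<in> E"
    using assms(2) by blast
  then have "j \<in> H"
    using closed \<open>v \<in> H\<close> by blast
  then obtain es where "walk E v j es"
    using connected by blast
  with \<open>(j, v, s) \<in> E\<close> have "walk E v v (es @ [(j, v, s)])"
    by (auto simp: walk_append)
  then show ?thesis
    by (rule closed_walk_contains_cycle) simp
qed

section \<open>Balanced sets of arcs\<close>

definition balanced :: "'v arc set \<Rightarrow> ('v \<Rightarrow> bool) \<Rightarrow> bool" where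
  "balanced E t \<longleftrightarrow> (\<forall>(j, i, s) \<in> E. s = bool_sign (t i) * bool_sign (t j))"

lemma balanced_Not: "balanced E t \<Longrightarrow> balanced E (\<lambda>u. \<not> t u)"
  by (auto simp: balanced_def)

lemma walk_sign_balanced:
  assumes "balanced E t" "walk E a b es"
  shows "cycle_sign es = bool_sign (t a) * bool_sign (t b)"
  using assms(2)
proof (induction es arbitrary: a)
  case (Cons e es)
  obtain i s where e: "e = (a, i, s)" "e \<in> E" "walk E i b es"
    using Cons.prems by (cases e) auto
  then have "s = bool_sign (t i) * bool_sign (t a)"
    using assms(1) by (auto simp: balanced_def)
  moreover have "cycle_sign es = bool_sign (t i) * bool_sign (t b)"
    using Cons.IH e(3) .
  ultimately have "cycle_sign (e # es) =
      bool_sign (t a) * (bool_sign (t i) * bool_sign (t i)) * bool_sign (t b)"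
    using e(1) by (simp add: ac_simps)
  then show ?case
    by simp
qed simp

lemma strongly_connected_balanced:
  assumes "signed_digraph E" "\<forall>a es. walk E a a es \<longrightarrow> cycle_sign es = 1"
    and "\<forall>u\<in>H. (\<exists>es. walk E v u es) \<and> (\<exists>es. walk E u v es)"
  shows "\<exists>t. balanced (arcs_within E H) t"
proof -
  define P where "P u = (SOME es. walk E v u es)" for u
  have P: "walk E v u (P u)" if "u \<in> H" for u
    unfolding P_def using assms(3) that by (metis someI_ex)
  \<comment> \<open>t u records the sign of a fixed walk from v to u; since closed walks are positive,
    every walk from v to u has this sign.\<close>
  define t where "t u = (cycle_sign (P u) = -1)" for u
  have sign_P: "bool_sign (t u) = cycle_sign (P u)" if "u \<in> H" for u
    using walk_sign_signed_digraph[OF assms(1) P[OF that]] by (auto simp: t_def bool_sign_def)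
  have "s = bool_sign (t i) * bool_sign (t j)"
    if "(j, i, s) \<in> E" "j \<in> H" "i \<in> H" for j i s
  proof -
    obtain Q where Q: "walk E i v Q"
      using assms(3) \<open>i \<in> H\<close> by blast
    have "walk E v v (P j @ [(j, i, s)] @ Q)" "walk E v v (P i @ Q)"
      using P Q that by (auto simp: walk_append)
    then have "cycle_sign (P j) * s * cycle_sign Q = 1" "cycle_sign (P i) * cycle_sign Q = 1"
      using assms(2) by (fastforce simp: mult.assoc)+
    moreover have "s = 1 \<or> s = -1"
      using assms(1) that(1) by (auto simp: signed_digraph_def)
    moreover have "cycle_sign (P i) = 1 \<or> cycle_sign (P i) = -1"
      using walk_sign_signed_digraph[OF assms(1) P[OF that(3)]] .
    moreover have "cycle_sign (P j) = 1 \<or> cycle_sign (P j) = -1"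
      using walk_sign_signed_digraph[OF assms(1) P[OF that(2)]] .
    ultimately have "s = cycle_sign (P i) * cycle_sign (P j)"
      by auto
    then show ?thesis
      using sign_P that(2,3) by simp
  qed
  then have "balanced (arcs_within E H) t"
    by (auto simp: balanced_def arcs_within_def)
  then show ?thesis
    by blast
qed

section \<open>Fixed points when all cycles are positive\<close>

lemma stable_subcube_override_balanced:
  fixes f :: "'v::finite bn"
  assumes "stable_subcube f F a" "nonconstant_outside f F a" "H \<inter> F = {}"
    and closed: "\<forall>j i s. (j, i, s) \<in> interaction_digraph f \<longrightarrow> i \<in> H \<longrightarrow> j \<notin> F \<longrightarrow> j \<in> H"
    and balanced: "balanced (arcs_within (interaction_digraph f) H) t"
  shows "stable_subcube f (F \<union> H) (override_on a t H)"
  unfolding stable_subcube_def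
proof (intro allI impI)
  fix x
  assume "in_subcube (F \<union> H) (override_on a t H) x"
  then have x: "in_subcube F a x" "\<forall>u\<in>H. x u = t u"
    using assms(3) by (auto simp: in_subcube_def override_on_def)
  \<comment> \<open>A change of coordinate i \<in> H would be witnessed by an in-arc from a free
    coordinate, which lies in H, where balance forbids the change.\<close>
  have "f x i = t i" if "i \<in> H" for i
  proof (rule ccontr)
    assume "f x i \<noteq> t i"
    have "i \<notin> F"
      using that assms(3) by blast
    then obtain z where "in_subcube F a z" "f z i \<noteq> f x i"
      using nonconstant_outsideD[OF assms(2) _ x(1)] by metis
    then obtain j where "j \<notin> F"
      and arc: "(j, i, bool_sign (f x i) * bool_sign (x j)) \<in> interaction_digraph f"
      using influencing_arc_in_subcube[OF x(1)] by blast
    then have "j \<in> H"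
      using closed that by blast
    then have "bool_sign (f x i) * bool_sign (x j) = bool_sign (t i) * bool_sign (t j)"
      using balanced arc that by (auto simp: balanced_def arcs_within_def)
    moreover have "f x i = (\<not> t i)" "x j = t j"
      using \<open>f x i \<noteq> t i\<close> x(2) \<open>j \<in> H\<close> by auto
    ultimately show False
      by (simp add: bool_sign_def split: if_splits)
  qed
  moreover have "in_subcube F a (f x)"
    using assms(1) x(1) by (simp add: stable_subcube_def)
  ultimately show "in_subcube (F \<union> H) (override_on a t H) (f x)"
    using assms(3) by (auto simp: in_subcube_def override_on_def)
qed

lemma two_fixed_points_in_subcube:
  fixes f :: "'v::finite bn"
  assumes positive: "\<forall>c. is_cycle (interaction_digraph f) c \<longrightarrow> cycle_sign c = 1"
    and "stable_subcube f F a" "F \<noteq> UNIV" "nonconstant_outside f F a"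
    and smaller: "\<forall>F' a'. card (- F') < card (- F) \<longrightarrow> stable_subcube f F' a' \<longrightarrow>
      (\<exists>x. in_subcube F' a' x \<and> f x = x)"
  shows "\<exists>x1 x2. in_subcube F a x1 \<and> in_subcube F a x2 \<and> f x1 = x1 \<and> f x2 = x2 \<and> x1 \<noteq> x2"
proof -
  define G where "G = interaction_digraph f"
  have "- F \<noteq> {}"
    using assms(3) by auto
  then obtain v H where "v \<in> H" "H \<subseteq> - F"
    and closed: "\<forall>j i s. (j, i, s) \<in> G \<longrightarrow> i \<in> H \<longrightarrow> j \<notin> F \<longrightarrow> j \<in> H"
    and connected: "\<forall>u\<in>H. (\<exists>es. walk G v u es) \<and> (\<exists>es. walk G u v es)"
    using initial_strong_component[of "- F" G] by auto
  have "H \<inter> F = {}" "v \<notin> F"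
    using \<open>H \<subseteq> - F\<close> \<open>v \<in> H\<close> by auto
  have closed_walks: "\<forall>b es. walk G b b es \<longrightarrow> cycle_sign es = 1"
    unfolding G_def by (intro allI impI) (rule closed_walk_sign[OF positive])
  obtain t where t: "balanced (arcs_within G H) t"
    using strongly_connected_balanced[OF interaction_digraph_signed[of f, folded G_def]
        closed_walks connected] by blast
  have card: "card (- (F \<union> H)) < card (- F)"
    using \<open>v \<in> H\<close> \<open>v \<notin> F\<close> by (intro psubset_card_mono) auto
  have fixed_point: "\<exists>x. in_subcube F a x \<and> f x = x \<and> x v = t' v"
    if "balanced (arcs_within G H) t'" for t'
  proof -
    have "stable_subcube f (F \<union> H) (override_on a t' H)"
      using stable_subcube_override_balanced[OF assms(2,4) \<open>H \<inter> F = {}\<close>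
          closed[unfolded G_def] that[unfolded G_def]] .
    then obtain x where x: "in_subcube (F \<union> H) (override_on a t' H) x" "f x = x"
      using smaller card by blast
    then have "in_subcube F a x" "x v = t' v"
      using \<open>v \<in> H\<close> \<open>H \<inter> F = {}\<close> by (auto simp: in_subcube_def override_on_def)
    with x(2) show ?thesis
      by blast
  qed
  obtain x1 x2 where "in_subcube F a x1" "f x1 = x1" "x1 v = t v"
    "in_subcube F a x2" "f x2 = x2" "x2 v = (\<not> t v)"
    using fixed_point[OF t] fixed_point[OF balanced_Not[OF t]] by blast
  then show ?thesis
    by (intro exI[of _ x1] exI[of _ x2]) auto
qed

lemma stable_subcube_fixed_point:
  fixes f :: "'v::finite bn"
  assumes positive: "\<forall>c. is_cycle (interaction_digraph f) c \<longrightarrow> cycle_sign c = 1"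
  shows "stable_subcube f F a \<Longrightarrow> \<exists>x. in_subcube F a x \<and> f x = x"
proof (induction "card (- F)" arbitrary: F a rule: less_induct)
  case less
  consider "F = UNIV" | "F \<noteq> UNIV" "nonconstant_outside f F a"
    | k c where "k \<notin> F" "\<forall>x. in_subcube F a x \<longrightarrow> f x k = c"
    unfolding nonconstant_outside_def by blast
  then show ?case
  proof cases
    case 1
    then have "f a = a"
      using less.prems by (auto simp: stable_subcube_def in_subcube_def)
    with in_subcube_refl show ?thesis
      by blast
  next
    case 2
    then show ?thesis
      using two_fixed_points_in_subcube[OF positive less.prems] less.hyps by blast
  next
    case (3 k c)
    then have "stable_subcube f (insert k F) (a(k := c))"
      by (rule stable_subcube_insert[OF less.prems])
    then obtain x where "in_subcube (insert k F) (a(k := c)) x" "f x = x"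
      using less.hyps card_Compl_insert_less[OF \<open>k \<notin> F\<close>] by blast
    moreover have "in_subcube F a x" if "in_subcube (insert k F) (a(k := c)) x" for x
      using that \<open>k \<notin> F\<close> by (auto simp: in_subcube_def)
    ultimately show ?thesis
      by blast
  qed
qed

lemma positive_cycle_if_nonconstant_outside:
  fixes f :: "'v::finite bn"
  assumes "f y = y" "nonconstant_outside f F y" "F \<noteq> UNIV"
  shows "\<exists>c. is_cycle (interaction_digraph f) c \<and> cycle_sign c = 1"
proof -
  define E where "E = {(j, i, s) \<in> interaction_digraph f. s = bool_sign (y i) * bool_sign (y j)}"
  have "\<forall>i\<in>- F. \<exists>j\<in>- F. \<exists>s. (j, i, s) \<in> E"
  proof
    fix i
    assume "i \<in> - F"
    then obtain z where "in_subcube F y z" "f z i \<noteq> f y i"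
      using nonconstant_outsideD[OF assms(2) _ in_subcube_refl] by blast
    then obtain j where "j \<notin> F"
      "(j, i, bool_sign (y i) * bool_sign (y j)) \<in> interaction_digraph f"
      using influencing_arc_in_subcube[OF in_subcube_refl] assms(1) by metis
    then show "\<exists>j\<in>- F. \<exists>s. (j, i, s) \<in> E"
      by (auto simp: E_def)
  qed
  moreover have "- F \<noteq> {}"
    using assms(3) by auto
  ultimately obtain u c where c: "walk E u u c" "is_cycle E c"
    using cycle_exists_if_all_in_arcs by meson
  have "balanced E y"
    by (auto simp: E_def balanced_def)
  then have "cycle_sign c = 1"
    using walk_sign_balanced[OF _ c(1)] by simp
  moreover have "is_cycle (interaction_digraph f) c"
    using c(2) by (rule is_cycle_mono) (auto simp: E_def)
  ultimately show ?thesis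
    by blast
qed

lemma unique_fixed_point_constant_outside:
  fixes f :: "'v::finite bn"
  assumes same_sign: "\<forall>c1 c2. is_cycle (interaction_digraph f) c1 \<and> is_cycle (interaction_digraph f) c2
      \<longrightarrow> cycle_sign c1 = cycle_sign c2"
    and unique: "\<forall>x. f x = x \<longleftrightarrow> x = y"
    and "stable_subcube f F y" "F \<noteq> UNIV"
  shows "\<not> nonconstant_outside f F y"
proof
  assume nonconstant: "nonconstant_outside f F y"
  have "f y = y"
    using unique by blast
  then have positive: "\<forall>c. is_cycle (interaction_digraph f) c \<longrightarrow> cycle_sign c = 1"
    using positive_cycle_if_nonconstant_outside[OF _ nonconstant \<open>F \<noteq> UNIV\<close>] same_sign by metis
  have "\<forall>F' a'. card (- F') < card (- F) \<longrightarrow> stable_subcube f F' a' \<longrightarrow>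
      (\<exists>x. in_subcube F' a' x \<and> f x = x)"
    using stable_subcube_fixed_point[OF positive] by blast
  then obtain x1 x2 where "f x1 = x1" "f x2 = x2" "x1 \<noteq> x2"
    using two_fixed_points_in_subcube[OF positive assms(3,4) nonconstant] by blast
  then show False
    using unique by metis
qed

section \<open>Synchronizing words\<close>

lemma upd_word_Nil [simp]: "upd_word f [] x = x"
  by (simp add: upd_word_def)

lemma upd_word_Cons [simp]: "upd_word f (k # w) x = upd_word f w (x(k := f x k))"
  by (simp add: upd_word_def upd1_def)

lemma upd_word_append: "upd_word f (u @ w) x = upd_word f w (upd_word f u x)"
  by (simp add: upd_word_def)

lemma upd_word_fixed_point: "f y = y \<Longrightarrow> upd_word f w y = y"
  by (induction w) (auto simp: fun_upd_idem)

lemma upd_word_in_stable_subcube: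
  "stable_subcube f F a \<Longrightarrow> in_subcube F a x \<Longrightarrow> in_subcube F a (upd_word f w x)"
proof (induction w arbitrary: x)
  case (Cons k w)
  then have "in_subcube F a (x(k := f x k))"
    by (auto simp: stable_subcube_def in_subcube_def)
  with Cons show ?case
    by simp
qed simp

lemma synchronizing_permutation_of_subcube:
  assumes "f y = y"
    and constancy: "\<forall>F. stable_subcube f F y \<longrightarrow> F \<noteq> UNIV \<longrightarrow> \<not> nonconstant_outside f F y"
  shows "stable_subcube f (F :: 'v::finite set) y \<Longrightarrow> \<exists>\<pi>. distinct \<pi> \<and> set \<pi> = - F \<and>
    (\<forall>w. subseq \<pi> w \<longrightarrow> (\<forall>x. in_subcube F y x \<longrightarrow> upd_word f w x = y))"
proof (induction "card (- F)" arbitrary: F rule: less_induct)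
  case less
  show ?case
  proof (cases "F = UNIV")
    case True
    then have "x = y" if "in_subcube F y x" for x
      using that by (auto simp: in_subcube_def)
    then show ?thesis
      using True upd_word_fixed_point[where f = f and y = y, OF \<open>f y = y\<close>]
      by (intro exI[of _ "[]"]) auto
  next
    case False
    then obtain k c where k: "k \<notin> F" "\<forall>x. in_subcube F y x \<longrightarrow> f x k = c"
      using constancy less.prems unfolding nonconstant_outside_def by blast
    then have "c = y k"
      using \<open>f y = y\<close> in_subcube_refl by metis
    then have "stable_subcube f (insert k F) y"
      using stable_subcube_insert[OF less.prems k] by simp
    then obtain \<pi> where \<pi>: "distinct \<pi>" "set \<pi> = - insert k F"
      "\<forall>w. subseq \<pi> w \<longrightarrow> (\<forall>x. in_subcube (insert k F) y x \<longrightarrow> upd_word f w x = y)"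
      using less.hyps card_Compl_insert_less[OF k(1)] by blast
    have "upd_word f w x = y" if "subseq (k # \<pi>) w" "in_subcube F y x" for w x
    proof -
      obtain us vs where w: "w = us @ k # vs" "subseq \<pi> vs"
        using list_emb_ConsD[OF \<open>subseq (k # \<pi>) w\<close>] by auto
      define x' where "x' = upd_word f us x"
      have "in_subcube F y x'"
        unfolding x'_def using upd_word_in_stable_subcube[OF less.prems that(2)] .
      then have "in_subcube (insert k F) y (x'(k := f x' k))"
        using k(2) \<open>c = y k\<close> by (auto simp: in_subcube_def)
      then show ?thesis
        using \<pi>(3) w by (simp add: upd_word_append x'_def)
    qed
    moreover have "distinct (k # \<pi>)" "set (k # \<pi>) = - F"
      using \<pi>(1,2) k(1) by auto
    ultimately show ?thesis
      by blast
  qed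
qed

theorem proposition7:
  fixes G :: "('v::finite) arc set" and f :: "'v bn"
  assumes "signed_digraph G"
    and "\<forall>c1 c2. is_cycle G c1 \<and> is_cycle G c2 \<longrightarrow> cycle_sign c1 = cycle_sign c2"
    and "interaction_digraph f = G"
    and "\<exists>!x. f x = x"
  shows "\<exists>\<pi>. distinct \<pi> \<and> set \<pi> = UNIV \<and> length \<pi> = card (UNIV :: 'v set) \<and>
           (\<forall>w. subseq \<pi> w \<longrightarrow> synchronizes w f) \<and> synchronizes \<pi> f"
proof -
  obtain y where unique: "\<forall>x. f x = x \<longleftrightarrow> x = y"
    using assms(4) by metis
  then have "f y = y"
    by blast
  have "\<forall>F. stable_subcube f F y \<longrightarrow> F \<noteq> UNIV \<longrightarrow> \<not> nonconstant_outside f F y"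
    using unique_fixed_point_constant_outside[OF assms(2)[folded assms(3)] unique] by blast
  moreover have "stable_subcube f {} y"
    by (simp add: stable_subcube_def in_subcube_def)
  ultimately have "\<exists>\<pi>. distinct \<pi> \<and> set \<pi> = - {} \<and>
      (\<forall>w. subseq \<pi> w \<longrightarrow> (\<forall>x. in_subcube {} y x \<longrightarrow> upd_word f w x = y))"
    by (rule synchronizing_permutation_of_subcube[where f = f and y = y, OF \<open>f y = y\<close>])
  then obtain \<pi> where \<pi>: "distinct \<pi>" "set \<pi> = UNIV"
    "\<forall>w. subseq \<pi> w \<longrightarrow> (\<forall>x. upd_word f w x = y)"
    by (auto simp: in_subcube_def)
  then have "\<forall>w. subseq \<pi> w \<longrightarrow> synchronizes w f"
    by (auto simp: synchronizes_def)
  moreover have "length \<pi> = card (UNIV :: 'v set)"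
    using distinct_card[OF \<pi>(1)] \<pi>(2) by simp
  ultimately show ?thesis
    using \<pi>(1,2) by blast
qed

end
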